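(* For every $\rho\in\mathfrak M_d$, $\sup_{\theta\in\Delta_d}R^{\mathrm{iid}}_\theta(\bar\rho)\le\sup_{\theta\in\Delta_d}R^{\mathrm{iid}}_\theta(\rho)$, and $$\sup_{\theta\in\Delta_d}R^{\mathrm{iid}}_\theta(\bar\rho)=\frac{(d-1)^2}{n\operatorname{tr}\Sigma(\rho)},$$ interpreted as $+\infty$ when $\operatorname{tr}\Sigma(\rho)=0$.
   Context: Fix $d\ge2$, $n\ge1$. Let $H\in\mathbb R^{d\times(d-1)}$ have orthonormal columns spanning $\{u\in\mathbb R^d:\mathbf 1^\top u=0\}$, $\gamma_i:=H^\top e_i$, $\mathcal X_d:=\{x\in\mathbb R^{d-1}:1+\gamma_i^\top x\ge0\ \forall i\}$, $\Delta_d$ the probability simplex, $h_\theta:=\sum_i\theta_i\gamma_i$. An anchored law is a Borel probability measure $\rho$ on $\mathcal X_d$ with $\int x\,\rho(dx)=0$; $\mathfrak M_d$ is the set of anchored laws; $\Sigma(\rho):=\int xx^\top\rho(dx)$. I.i.d. risk: $X_1,\dots,X_n$ i.i.d. with law $(1+h_\theta^\top x)\rho(dx)$, $\widehat\theta_\rho:=\mathbf 1/d+H\Sigma(\rho)^{-1}\frac1n\sum_mX_m$, $R^{\mathrm{iid}}_\theta(\rho):=\mathbb E\|\widehat\theta_\rho-\theta\|_2^2$, with $R^{\mathrm{iid}}_\theta(\rho):=+\infty$ whenever $\Sigma(\rho)$ is singular. Symmetrization: for a permutation $\pi$ with matrix $\Pi$, $P_\pi:=H^\top\Pi H$, and $\bar\rho:=\frac1{d!}\sum_\pi(P_\pi)_\#\rho$.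 *)

theory Defs
  imports "HOL-Probability.Probability"
begin

text \<open>Dimensions: the ambient space R^d is real^'d (d = CARD('d)), the chart space
R^(d-1) is real^'k.  H is a d x (d-1) matrix, i.e. of type real^'k^'d.\<close>

definition ones :: "real^'d" where
  "ones = (\<chi> i. 1)"

definition gam :: "real^'k^'d \<Rightarrow> 'd \<Rightarrow> real^'k" where
  "gam H i = transpose H *v axis i 1"

definition Xd :: "real^'k^'d \<Rightarrow> (real^'k) set" where
  "Xd H = {x. \<forall>i. 1 + gam H i \<bullet> x \<ge> 0}"

definition prob_simplex :: "(real^'d) set" where
  "prob_simplex = {\<theta>. (\<forall>i. \<theta> $ i \<ge> 0) \<and> (\<Sum>i\<in>UNIV. \<theta> $ i) = 1}"

definition hvec :: "real^'k^'d \<Rightarrow> real^'d \<Rightarrow> real^'k" where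
  "hvec H \<theta> = (\<Sum>i\<in>UNIV. \<theta> $ i *\<^sub>R gam H i)"

definition anchored :: "real^'k^'d \<Rightarrow> (real^'k) measure \<Rightarrow> bool" where
  "anchored H \<rho> \<longleftrightarrow> prob_space \<rho> \<and> sets \<rho> = sets borel \<and>
     (AE x in \<rho>. x \<in> Xd H) \<and> (\<integral>x. x \<partial>\<rho>) = 0"

definition Sig :: "(real^'k) measure \<Rightarrow> real^'k^'k" where
  "Sig \<rho> = (\<chi> i j. \<integral>x. x $ i * x $ j \<partial>\<rho>)"

definition obs_law :: "real^'k^'d \<Rightarrow> real^'d \<Rightarrow> (real^'k) measure \<Rightarrow> (real^'k) measure" where
  "obs_law H \<theta> \<rho> = density \<rho> (\<lambda>x. ennreal (1 + hvec H \<theta> \<bullet> x))"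

definition theta_hat :: "nat \<Rightarrow> real^'k^'d \<Rightarrow> (real^'k) measure \<Rightarrow> (nat \<Rightarrow> real^'k) \<Rightarrow> real^'d" where
  "theta_hat n H \<rho> X = (1 / real CARD('d)) *\<^sub>R ones
      + H *v (matrix_inv (Sig \<rho>) *v ((1 / real n) *\<^sub>R (\<Sum>m<n. X m)))"

definition R_iid :: "nat \<Rightarrow> real^'k^'d \<Rightarrow> real^'d \<Rightarrow> (real^'k) measure \<Rightarrow> ennreal" where
  "R_iid n H \<theta> \<rho> =
     (if \<not> invertible (Sig \<rho>) then \<infinity>
      else \<integral>\<^sup>+ X. ennreal ((norm (theta_hat n H \<rho> X - \<theta>))\<^sup>2)
             \<partial>(\<Pi>\<^sub>M m\<in>{..<n}. obs_law H \<theta> \<rho>))"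

definition perm_mat :: "('d \<Rightarrow> 'd) \<Rightarrow> real^'d^'d" where
  "perm_mat \<pi> = (\<chi> j i. if j = \<pi> i then 1 else 0)"

definition Pperm :: "real^'k^'d \<Rightarrow> ('d \<Rightarrow> 'd) \<Rightarrow> real^'k^'k" where
  "Pperm H \<pi> = transpose H ** perm_mat \<pi> ** H"

definition sym_law :: "real^'k^'d \<Rightarrow> (real^'k) measure \<Rightarrow> (real^'k) measure" where
  "sym_law H \<rho> = measure_of UNIV (sets borel)
     (\<lambda>A. (\<Sum>\<pi>\<in>{\<pi>. \<pi> permutes (UNIV::'d set)}.
             emeasure (distr \<rho> borel (\<lambda>x. Pperm H \<pi> *v x)) A) / of_nat (fact CARD('d)))"

end

(*
  Write h = H^T theta. The error of the estimator is H applied to the sample mean of the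
  i.i.d. vectors Sigma^-1 X - h, which are centred because X has mean Sigma h under
  (1 + h.x) rho(dx); hence
    R_theta(rho) = (int (1 + h.x) |Sigma^-1 x|^2 rho(dx) - |h|^2) / n.
  The maps P_pi are orthogonal and preserve X_d. Averaging over all of them makes the second
  moments of H x exchangeable, so Sigma(rho_bar) = (tr Sigma(rho) / (d - 1)) I, and it kills the
  third moments int x |x|^2 rho_bar(dx). Therefore
    R_theta(rho_bar) = ((d - 1)^2 / tr Sigma(rho) - |h|^2) / n,
  maximal at the barycentre, where h = 0. There R_theta(rho) = int |Sigma^-1 x|^2 rho(dx) / n,
  which is at least (d - 1)^2 / (n tr Sigma(rho)) by Cauchy-Schwarz, because
  int x . Sigma^-1 x rho(dx) = tr (Sigma^-1 Sigma) = d - 1.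
*)
theory Submission
  imports Defs
begin

section \<open>Permutation matrices\<close>

lemma perm_mat_mult_apply:
  assumes "p permutes (UNIV::'d::finite set)"
  shows "(perm_mat p *v y) $ a = y $ inv p a"
proof -
  have "(perm_mat p *v y) $ a = (\<Sum>j\<in>UNIV. (if a = p j then 1 else 0) * y $ j)"
    by (simp add: matrix_vector_mult_def perm_mat_def)
  also have "\<dots> = (\<Sum>j\<in>UNIV. if j = inv p a then y $ j else 0)"
    by (rule sum.cong[OF refl]) (auto simp: permutes_inverses[OF assms])
  finally show ?thesis by simp
qed

lemma sum_perm_mat_mult:
  assumes "p permutes (UNIV::'d::finite set)"
  shows "(\<Sum>a\<in>UNIV. (perm_mat p *v y) $ a) = (\<Sum>a\<in>UNIV. y $ a)"
  using sum.permute[OF permutes_inv[OF assms], of "\<lambda>a. y $ a"]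
  by (simp add: perm_mat_mult_apply[OF assms] o_def)

lemma norm_perm_mat_mult:
  assumes "p permutes (UNIV::'d::finite set)"
  shows "norm (perm_mat p *v (y::real^'d)) = norm y"
proof -
  have "(perm_mat p *v y) \<bullet> (perm_mat p *v y) = y \<bullet> y"
    using sum.permute[OF permutes_inv[OF assms], of "\<lambda>a. y $ a * y $ a"]
    by (simp add: inner_vec_def perm_mat_mult_apply[OF assms] o_def)
  then show ?thesis by (simp add: norm_eq_sqrt_inner)
qed

lemma sum_permutations_apply_compose:
  assumes "q permutes (UNIV::'d::finite set)"
  shows "(\<Sum>p | p permutes (UNIV::'d set). W (p (q a)) (p (q b)) :: real)
       = (\<Sum>p | p permutes (UNIV::'d set). W (p a) (p b))"
  using sum_permutations_compose_right[OF assms, of "\<lambda>p. W (p a) (p b)"] by (simp add: o_def)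

lemma sum_permutations_apply_diag:
  "(\<Sum>p | p permutes (UNIV::'d::finite set). W (p a) (p a) :: real)
     = (\<Sum>p | p permutes (UNIV::'d set). W (p c) (p c))"
  using sum_permutations_apply_compose[OF permutes_swap_id[of a UNIV c], of W c c] by simp

lemma sum_permutations_apply_off_diag:
  assumes "a \<noteq> b" and "c \<noteq> e"
  shows "(\<Sum>p | p permutes (UNIV::'d::finite set). W (p a) (p b) :: real)
       = (\<Sum>p | p permutes (UNIV::'d set). W (p c) (p e))"
proof -
  define b' where "b' = Transposition.transpose a c b"
  have "c \<noteq> b'" using assms(1) by (auto simp: b'_def Transposition.transpose_def)
  then show ?thesis
    using sum_permutations_apply_compose[OF permutes_swap_id[of a UNIV c], of W a b]
      sum_permutations_apply_compose[OF permutes_swap_id[of b' UNIV e], of W c b'] assms(2)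
    by (simp add: b'_def transpose_def)
qed

lemma matrix_inv_left: "invertible A \<Longrightarrow> matrix_inv A ** A = mat 1"
  unfolding invertible_def matrix_inv_def by (metis (mono_tags, lifting) someI_ex)

lemma power2_norm_vec: "(norm (x::real^'n))\<^sup>2 = (\<Sum>i\<in>UNIV. (x $ i)\<^sup>2)"
  by (simp only: power2_norm_eq_inner inner_vec_def) (simp add: power2_eq_square)

lemma invertible_scaleR_mat_1_iff: "invertible (c *\<^sub>R (mat 1 :: real^'n^'n)) \<longleftrightarrow> c \<noteq> 0"
proof
  assume "invertible (c *\<^sub>R (mat 1 :: real^'n^'n))"
  then obtain B :: "real^'n^'n" where "(c *\<^sub>R mat 1) ** B = mat 1"
    unfolding invertible_def by blast
  then have B: "c *\<^sub>R B = mat 1" by (simp add: scalar_matrix_assoc[symmetric])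
  show "c \<noteq> 0"
  proof
    assume "c = 0"
    then have "(mat 1 :: real^'n^'n) $ undefined $ undefined = 0" using B by simp
    then show False by (simp add: mat_def)
  qed
next
  assume "c \<noteq> 0"
  moreover have "invertible (mat 1 :: real^'n^'n)"
    unfolding invertible_def by (rule exI[of _ "mat 1"]) simp
  ultimately show "invertible (c *\<^sub>R (mat 1 :: real^'n^'n))"
    by (rule scalar_invertible)
qed

lemma matrix_inv_scaleR_mat_1:
  assumes "c \<noteq> 0"
  shows "matrix_inv (c *\<^sub>R (mat 1 :: real^'n^'n)) = (1 / c) *\<^sub>R mat 1"
proof -
  have "matrix_inv (c *\<^sub>R (mat 1 :: real^'n^'n)) ** (c *\<^sub>R mat 1) = mat 1"
    using assms by (simp add: matrix_inv_left invertible_scaleR_mat_1_iff)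
  then have "c *\<^sub>R matrix_inv (c *\<^sub>R (mat 1 :: real^'n^'n)) = mat 1"
    by (simp add: matrix_scalar_ac)
  then show ?thesis
    using assms by (metis divide_inverse_commute divide_self_if scaleR_one scaleR_scaleR)
qed

lemma trace_scaleR_mat_1: "trace (c *\<^sub>R (mat 1 :: real^'n^'n)) = c * real CARD('n)"
  by (simp add: trace_def mat_def)

section \<open>Integration against mixtures and products\<close>

lemma borel_measurable_matrix_vector_mult [measurable]:
  "(\<lambda>x. (A::real^'n^'m) *v x) \<in> borel_measurable borel"
  by (intro borel_measurable_continuous_onI linear_continuous_on matrix_vector_mul_linear)
     (simp add: linear_conv_bounded_linear)

lemma integrable_continuous_bounded_support:
  fixes g :: "'a::{real_normed_vector, heine_borel} \<Rightarrow> 'b::{banach, second_countable_topology}"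
  assumes "finite_measure M" and "sets M = sets borel" and "AE x in M. norm x \<le> C"
    and "continuous_on UNIV g"
  shows "integrable M g"
proof -
  interpret finite_measure M by fact
  have "compact (g ` cball 0 C)"
    using assms(4) by (intro compact_continuous_image) (auto intro: continuous_on_subset)
  then obtain B where B: "\<And>x. norm x \<le> C \<Longrightarrow> norm (g x) \<le> B"
    by (metis bounded_iff compact_imp_bounded image_eqI mem_cball_0)
  have "g \<in> borel_measurable M"
    using measurable_cong_sets[OF assms(2) refl] borel_measurable_continuous_onI[OF assms(4)] by blast
  then show ?thesis
    using assms(3) B by (intro integrable_const_bound[where B=B]) (auto elim!: eventually_mono)
qed

lemma sum_divide_of_nat_ennreal:
  assumes "\<And>i. i \<in> A \<Longrightarrow> a i \<noteq> \<infinity>" and "0 < c"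
  shows "(\<Sum>i\<in>A. a i) / of_nat c = ennreal ((\<Sum>i\<in>A. enn2real (a i)) / real c)"
proof -
  have "(\<Sum>i\<in>A. a i) = (\<Sum>i\<in>A. ennreal (enn2real (a i)))"
    using assms(1) by (intro sum.cong) (auto simp: less_top)
  also have "\<dots> = ennreal (\<Sum>i\<in>A. enn2real (a i))" by simp
  finally show ?thesis
    using assms(2) by (simp add: ennreal_of_nat_eq_real_of_nat divide_ennreal sum_nonneg)
qed

lemma integral_bind_pmf_of_set:
  fixes f :: "'a \<Rightarrow> real" and M :: "'i \<Rightarrow> 'a measure"
  assumes A: "finite A" "A \<noteq> {}"
    and M: "\<And>i. subprob_space (M i)" "\<And>i. sets (M i) = sets K"
    and f: "\<And>i. i \<in> A \<Longrightarrow> integrable (M i) f"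
  shows "(\<integral>x. f x \<partial>(measure_pmf (pmf_of_set A) \<bind> M)) = (\<Sum>i\<in>A. \<integral>x. f x \<partial>M i) / card A"
proof -
  let ?N = "measure_pmf (pmf_of_set A) \<bind> M"
  have M_meas: "M \<in> measurable (measure_pmf (pmf_of_set A)) (subprob_algebra K)"
    using M by (simp add: space_subprob_algebra)
  have sets_N: "sets ?N = sets K"
    by (rule sets_bind_measurable[OF M_meas]) simp
  obtain i0 where "i0 \<in> A" using A by blast
  then have f_meas: "f \<in> borel_measurable K"
    using f measurable_cong_sets[OF M(2) refl] by blast
  have card_pos: "0 < card A" using A by (simp add: card_gt_0_iff)
  have nn: "(\<integral>\<^sup>+x. ennreal (s * f x) \<partial>?N)
      = ennreal ((\<Sum>i\<in>A. enn2real (\<integral>\<^sup>+x. ennreal (s * f x) \<partial>M i)) / card A)"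
    if "s = 1 \<or> s = -1" for s
  proof -
    have "(\<integral>\<^sup>+x. ennreal (s * f x) \<partial>?N) = (\<Sum>i\<in>A. \<integral>\<^sup>+x. ennreal (s * f x) \<partial>M i) / of_nat (card A)"
      using f_meas M_meas A
      by (simp add: nn_integral_bind[where B=K] nn_integral_pmf_of_set)
    also have "\<dots> = ennreal ((\<Sum>i\<in>A. enn2real (\<integral>\<^sup>+x. ennreal (s * f x) \<partial>M i)) / card A)"
      using f that card_pos by (intro sum_divide_of_nat_ennreal) (auto simp: real_integrable_def)
    finally show ?thesis .
  qed
  have "integrable ?N f"
    using nn[of 1] nn[of "-1"] f_meas measurable_cong_sets[OF sets_N refl]
    by (auto simp: real_integrable_def)
  then show ?thesis
    using nn[of 1] nn[of "-1"] f
    by (simp add: real_lebesgue_integral_def sum_nonneg sum_subtractf diff_divide_distrib)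
qed

lemma
  fixes f g :: "'a \<Rightarrow> real" and n m m' :: nat
  assumes "prob_space \<nu>" and "integrable \<nu> f" "integrable \<nu> g" "integrable \<nu> (\<lambda>z. f z * g z)"
    and "m < n" "m' < n"
  shows integrable_PiM_coordinate_product:
      "integrable (PiM {..<n} (\<lambda>_. \<nu>)) (\<lambda>x. f (x m) * g (x m'))"
    and integral_PiM_coordinate_product:
      "(\<integral>x. f (x m) * g (x m') \<partial>PiM {..<n} (\<lambda>_. \<nu>))
         = (if m = m' then (\<integral>z. f z * g z \<partial>\<nu>) else (\<integral>z. f z \<partial>\<nu>) * (\<integral>z. g z \<partial>\<nu>))"
proof -
  interpret prob_space \<nu> by fact
  interpret product_sigma_finite "\<lambda>_::nat. \<nu>" by unfold_locales
  define F where "F j z = (if j = m then f z else 1) * (if j = m' then g z else 1)" for j z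
  have F_int: "integrable \<nu> (F j)" for j
    using assms(2-4) by (cases "j = m"; cases "j = m'") (auto simp: F_def[abs_def])
  have F_prod: "(\<Prod>j<n. F j (x j)) = f (x m) * g (x m')" for x
    using assms(5,6) by (simp add: F_def prod.distrib)
  show "integrable (PiM {..<n} (\<lambda>_. \<nu>)) (\<lambda>x. f (x m) * g (x m'))"
    using product_integrable_prod[of "{..<n}" F] F_int by (simp add: F_prod)
  have "(\<integral>x. f (x m) * g (x m') \<partial>PiM {..<n} (\<lambda>_. \<nu>)) = (\<Prod>j<n. integral\<^sup>L \<nu> (F j))"
    using product_integral_prod[of "{..<n}" F] F_int by (simp add: F_prod)
  also have "\<dots> = (if m = m' then (\<integral>z. f z * g z \<partial>\<nu>) else (\<integral>z. f z \<partial>\<nu>) * (\<integral>z. g z \<partial>\<nu>))"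
  proof (cases "m = m'")
    case True
    then have "integral\<^sup>L \<nu> (F j) = (if j = m then \<integral>z. f z * g z \<partial>\<nu> else 1)" for j
      by (simp add: F_def[abs_def] prob_space)
    then show ?thesis using True assms(5) by simp
  next
    case False
    then have "integral\<^sup>L \<nu> (F j)
        = (if j = m then \<integral>z. f z \<partial>\<nu> else 1) * (if j = m' then \<integral>z. g z \<partial>\<nu> else 1)" for j
      by (simp add: F_def[abs_def] prob_space)
    then show ?thesis using False assms(5,6) by (simp add: prod.distrib)
  qed
  finally show "(\<integral>x. f (x m) * g (x m') \<partial>PiM {..<n} (\<lambda>_. \<nu>))
         = (if m = m' then (\<integral>z. f z * g z \<partial>\<nu>) else (\<integral>z. f z \<partial>\<nu>) * (\<integral>z. g z \<partial>\<nu>))" .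
qed

lemma
  fixes Y :: "'a \<Rightarrow> real" and n :: nat
  assumes "prob_space \<nu>" and "integrable \<nu> Y" "integrable \<nu> (\<lambda>z. (Y z)\<^sup>2)" and "(\<integral>z. Y z \<partial>\<nu>) = 0"
  shows integrable_PiM_square_sum: "integrable (PiM {..<n} (\<lambda>_. \<nu>)) (\<lambda>x. (\<Sum>m<n. Y (x m))\<^sup>2)"
    and integral_PiM_square_sum_centered:
      "(\<integral>x. (\<Sum>m<n. Y (x m))\<^sup>2 \<partial>PiM {..<n} (\<lambda>_. \<nu>)) = real n * (\<integral>z. (Y z)\<^sup>2 \<partial>\<nu>)"
proof -
  have sq: "(\<Sum>m<n. Y (x m))\<^sup>2 = (\<Sum>m<n. \<Sum>m'<n. Y (x m) * Y (x m'))" for x :: "nat \<Rightarrow> 'a"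
    by (simp add: power2_eq_square sum_product)
  have Y2: "integrable \<nu> (\<lambda>z. Y z * Y z)" using assms(3) by (simp add: power2_eq_square)
  note cross = integrable_PiM_coordinate_product[OF assms(1,2,2) Y2]
    integral_PiM_coordinate_product[OF assms(1,2,2) Y2]
  show "integrable (PiM {..<n} (\<lambda>_. \<nu>)) (\<lambda>x. (\<Sum>m<n. Y (x m))\<^sup>2)"
    unfolding sq by (intro Bochner_Integration.integrable_sum cross(1)) auto
  have "(\<integral>x. (\<Sum>m<n. Y (x m))\<^sup>2 \<partial>PiM {..<n} (\<lambda>_. \<nu>))
      = (\<Sum>m<n. \<Sum>m'<n. \<integral>x. Y (x m) * Y (x m') \<partial>PiM {..<n} (\<lambda>_. \<nu>))"
    unfolding sq
    by (subst Bochner_Integration.integral_sum, fastforce intro: cross(1))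
       (intro sum.cong refl Bochner_Integration.integral_sum cross(1); simp)
  also have "\<dots> = (\<Sum>m<n. \<integral>z. (Y z)\<^sup>2 \<partial>\<nu>)"
    by (simp add: cross(2) assms(4) power2_eq_square if_distrib cong: if_cong)
  finally show "(\<integral>x. (\<Sum>m<n. Y (x m))\<^sup>2 \<partial>PiM {..<n} (\<lambda>_. \<nu>)) = real n * (\<integral>z. (Y z)\<^sup>2 \<partial>\<nu>)"
    by simp
qed

section \<open>Second moments\<close>

lemma trace_Sig_eq_integral:
  assumes "\<And>i. integrable M (\<lambda>x::real^'k. x $ i * x $ i)"
  shows "trace (Sig M) = (\<integral>x. (norm x)\<^sup>2 \<partial>M)"
proof -
  have "(\<integral>x. (norm x)\<^sup>2 \<partial>M) = (\<integral>x. (\<Sum>i\<in>UNIV. x $ i * x $ i) \<partial>M)"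
    by (simp only: power2_norm_vec) (simp add: power2_eq_square)
  also have "\<dots> = trace (Sig M)"
    using assms by (simp add: trace_def Sig_def)
  finally show ?thesis ..
qed

lemma square_le_of_quadratic_nonneg:
  fixes P Q R :: real
  assumes nonneg: "\<And>t. 0 \<le> Q - 2 * t * R + t\<^sup>2 * P" and "0 \<le> P"
  shows "R\<^sup>2 \<le> P * Q"
proof (cases "P = 0")
  case True
  have "R = 0"
  proof (rule ccontr)
    assume "R \<noteq> 0"
    then show False
      using nonneg[of "(Q + 1) / (2 * R)"] True by (simp add: field_simps)
  qed
  then show ?thesis using nonneg[of 0] True by simp
next
  case False
  then have "0 < P" using assms(2) by simp
  then show ?thesis
    using nonneg[of "R / P"] by (simp add: power2_eq_square field_simps)
qed

lemma card_square_le_trace_Sig_mult: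
  fixes \<mu> :: "(real^'k) measure"
  assumes "finite_measure \<mu>" and "sets \<mu> = sets borel" and "AE z in \<mu>. norm z \<le> C"
    and "invertible (Sig \<mu>)"
  shows "real CARD('k) ^ 2 \<le> trace (Sig \<mu>) * (\<integral>z. (norm (matrix_inv (Sig \<mu>) *v z))\<^sup>2 \<partial>\<mu>)"
proof -
  let ?A = "matrix_inv (Sig \<mu>)"
  have int: "continuous_on UNIV g \<Longrightarrow> integrable \<mu> (g :: real^'k \<Rightarrow> real)" for g
    by (rule integrable_continuous_bounded_support[OF assms(1-3)])
  define P where "P = (\<integral>z. (norm z)\<^sup>2 \<partial>\<mu>)"
  define Q where "Q = (\<integral>z. (norm (?A *v z))\<^sup>2 \<partial>\<mu>)"
  define R where "R = (\<integral>z. z \<bullet> (?A *v z) \<partial>\<mu>)"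
  have P: "trace (Sig \<mu>) = P"
    unfolding P_def by (intro trace_Sig_eq_integral int continuous_intros)
  have "R = (\<integral>z. (\<Sum>i\<in>UNIV. \<Sum>j\<in>UNIV. ?A $ i $ j * (z $ j * z $ i)) \<partial>\<mu>)"
    unfolding R_def inner_vec_def matrix_vector_mult_def
    by (simp add: sum_distrib_left sum_distrib_right mult_ac)
  also have "\<dots> = (\<Sum>i\<in>UNIV. \<Sum>j\<in>UNIV. ?A $ i $ j * (\<integral>z. z $ j * z $ i \<partial>\<mu>))"
  proof -
    have "integrable \<mu> (\<lambda>z. ?A $ i $ j * (z $ j * z $ i))" for i j
      by (intro integrable_mult_right int continuous_intros)
    then show ?thesis
      by (simp add: Bochner_Integration.integral_sum)
  qed
  also have "\<dots> = trace (?A ** Sig \<mu>)"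
    by (simp add: trace_def matrix_matrix_mult_def Sig_def)
  also have "\<dots> = real CARD('k)"
    by (simp add: matrix_inv_left[OF assms(4)] trace_I)
  finally have R: "R = real CARD('k)" .
  have "0 \<le> Q - 2 * t * R + t\<^sup>2 * P" for t
  proof -
    have "0 \<le> (\<integral>z. (norm (?A *v z - t *\<^sub>R z))\<^sup>2 \<partial>\<mu>)"
      by simp
    also have "\<dots> = (\<integral>z. (norm (?A *v z))\<^sup>2 - 2 * t * (z \<bullet> (?A *v z)) + t\<^sup>2 * (norm z)\<^sup>2 \<partial>\<mu>)"
      unfolding power2_norm_eq_inner by (simp add: inner_commute power2_eq_square algebra_simps)
    also have "\<dots> = Q - 2 * t * R + t\<^sup>2 * P"
    proof -
      have "integrable \<mu> (\<lambda>z. (norm (?A *v z))\<^sup>2)" "integrable \<mu> (\<lambda>z. 2 * t * (z \<bullet> (?A *v z)))"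
        "integrable \<mu> (\<lambda>z. t\<^sup>2 * (norm z)\<^sup>2)"
        by (intro int continuous_intros)+
      then show ?thesis
        unfolding P_def Q_def R_def by simp
    qed
    finally show ?thesis .
  qed
  moreover have "0 \<le> P" unfolding P_def by simp
  ultimately show ?thesis
    using square_le_of_quadratic_nonneg[of Q R P] P R Q_def by simp
qed

section \<open>The simplex chart\<close>

locale simplex_chart =
  fixes H :: "real^'k^'d"
  assumes H_orth: "transpose H ** H = mat 1"
    and H_span: "span (columns H) = {u. (\<Sum>i\<in>UNIV. u $ i) = 0}"
begin

lemma column_sum_eq_0: "(\<Sum>i\<in>UNIV. H $ i $ j) = 0"
proof -
  have "column j H \<in> span (columns H)"
    by (rule span_base) (auto simp: columns_def)
  then show ?thesis using H_span by (simp add: column_def)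
qed

lemma transpose_mult_ones: "transpose H *v ones = 0"
  using column_sum_eq_0 by (simp add: vec_eq_iff matrix_vector_mult_def transpose_def ones_def)

lemma sum_mult_H: "(\<Sum>i\<in>UNIV. (H *v x) $ i) = 0"
proof -
  have "(\<Sum>i\<in>UNIV. (H *v x) $ i) = (\<Sum>i\<in>UNIV. \<Sum>j\<in>UNIV. H $ i $ j * x $ j)"
    by (simp add: matrix_vector_mult_def)
  also have "\<dots> = (\<Sum>j\<in>UNIV. (\<Sum>i\<in>UNIV. H $ i $ j) * x $ j)"
    by (subst sum.swap) (simp add: sum_distrib_right)
  finally show ?thesis by (simp add: column_sum_eq_0)
qed

lemma H_mult_transpose_mult:
  assumes "(\<Sum>i\<in>UNIV. u $ i) = 0"
  shows "H *v (transpose H *v u) = u"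
proof -
  have "span (columns H) \<subseteq> range (\<lambda>c. H *v c)"
    by (intro span_minimal linear_subspace_image subspace_UNIV matrix_vector_mul_linear)
       (auto simp: columns_image_basis)
  then obtain c where u: "u = H *v c" using assms H_span by blast
  then show ?thesis by (simp add: matrix_vector_mul_assoc H_orth)
qed

lemma norm_H_mult: "norm (H *v x) = norm x"
proof -
  have "(H *v x) \<bullet> (H *v x) = x \<bullet> (transpose H *v (H *v x))"
    by (metis dot_lmul_matrix vector_transpose_matrix)
  then show ?thesis by (simp add: matrix_vector_mul_assoc H_orth norm_eq_sqrt_inner)
qed

lemma norm_transpose_mult:
  assumes "(\<Sum>i\<in>UNIV. z $ i) = 0"
  shows "norm (transpose H *v z) = norm z"
  using norm_H_mult[of "transpose H *v z"] H_mult_transpose_mult[OF assms] by simp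

lemma gam_inner: "gam H i \<bullet> x = (H *v x) $ i"
proof -
  have "gam H i \<bullet> x = axis i 1 \<bullet> (H *v x)"
    unfolding gam_def by (metis dot_lmul_matrix transpose_transpose vector_transpose_matrix)
  then show ?thesis by (simp add: inner_axis')
qed

lemma hvec_eq: "hvec H \<theta> = transpose H *v \<theta>"
proof -
  have "(hvec H \<theta>) $ j = (\<Sum>i\<in>UNIV. \<theta> $ i * H $ i $ j)" for j
    unfolding hvec_def gam_def matrix_vector_mult_def transpose_def axis_def
    by (simp add: if_distrib cong: if_cong)
  then show ?thesis
    by (simp add: vec_eq_iff matrix_vector_mult_def transpose_def mult.commute del: transpose_matrix_vector)
qed

lemma H_mult_hvec:
  assumes "\<theta> \<in> prob_simplex"
  shows "H *v hvec H \<theta> = \<theta> - (1 / real CARD('d)) *\<^sub>R ones"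
proof -
  let ?u = "\<theta> - (1 / real CARD('d)) *\<^sub>R ones"
  have "(\<Sum>i\<in>UNIV. ?u $ i) = 0"
    using assms by (simp add: prob_simplex_def sum_subtractf ones_def)
  moreover have "transpose H *v ?u = transpose H *v \<theta>"
    by (simp add: matrix_vector_mult_diff_distrib matrix_vector_mult_scaleR transpose_mult_ones
             del: transpose_matrix_vector)
  ultimately show ?thesis
    using H_mult_transpose_mult[of ?u] by (simp add: hvec_eq del: transpose_matrix_vector)
qed

lemma Xd_borel: "Xd H \<in> sets borel"
proof -
  have "Xd H = (\<Inter>i. {x. 0 \<le> 1 + gam H i \<bullet> x})" by (auto simp: Xd_def)
  also have "\<dots> \<in> sets borel" by measurable
  finally show ?thesis .
qed

lemma norm_le_of_Xd:
  assumes "x \<in> Xd H"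
  shows "norm x \<le> real CARD('d) ^ 2"
proof -
  have lower: "-1 \<le> (H *v x) $ i" for i
    using assms unfolding Xd_def gam_inner by (smt (verit) mem_Collect_eq)
  have abs_le: "\<bar>(H *v x) $ i\<bar> \<le> real CARD('d)" for i
  proof -
    have "(H *v x) $ i = - (\<Sum>j\<in>UNIV-{i}. (H *v x) $ j)"
      using sum_mult_H[of x] by (simp add: sum.remove[of UNIV i] algebra_simps)
    also have "\<dots> \<le> (\<Sum>j\<in>UNIV-{i}. 1)"
      unfolding sum_negf[symmetric] by (rule sum_mono) (use lower in auto)
    also have "\<dots> \<le> real CARD('d)" by (simp add: card_Diff_singleton)
    finally have "(H *v x) $ i \<le> real CARD('d)" .
    moreover have "1 \<le> real CARD('d)"
      using zero_less_card_finite[where 'a='d] by (simp add: Suc_le_eq)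
    ultimately show ?thesis using lower[of i] by linarith
  qed
  have "norm x = norm (H *v x)" by (simp add: norm_H_mult)
  also have "\<dots> \<le> (\<Sum>i\<in>UNIV. \<bar>(H *v x) $ i\<bar>)" by (rule norm_le_l1_cart)
  also have "\<dots> \<le> (\<Sum>i\<in>(UNIV::'d set). real CARD('d))" by (rule sum_mono) (rule abs_le)
  finally show ?thesis by (simp add: power2_eq_square)
qed

lemma one_plus_hvec_inner_nonneg:
  assumes "x \<in> Xd H" and "\<theta> \<in> prob_simplex"
  shows "0 \<le> 1 + hvec H \<theta> \<bullet> x"
proof -
  have "1 + hvec H \<theta> \<bullet> x = (\<Sum>i\<in>UNIV. \<theta> $ i * (1 + gam H i \<bullet> x))"
    using assms(2) unfolding hvec_def prob_simplex_def
    by (simp add: inner_sum_left sum.distrib algebra_simps)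
  also have "\<dots> \<ge> 0"
    using assms unfolding Xd_def prob_simplex_def by (intro sum_nonneg mult_nonneg_nonneg) auto
  finally show ?thesis .
qed

lemma Pperm_mult: "Pperm H p *v x = transpose H *v (perm_mat p *v (H *v x))"
  unfolding Pperm_def
  by (simp add: matrix_vector_mul_assoc matrix_mul_assoc del: transpose_matrix_vector)

lemma Pperm_mult_nth:
  assumes "p permutes (UNIV::'d set)"
  shows "(Pperm H p *v x) $ l = (\<Sum>a\<in>UNIV. H $ a $ l * (H *v x) $ inv p a)"
proof -
  have "(transpose H *v z) $ l = (\<Sum>a\<in>UNIV. H $ a $ l * z $ a)" for z
    by (simp add: matrix_vector_mult_def transpose_def del: transpose_matrix_vector)
  then show ?thesis
    by (simp add: Pperm_mult perm_mat_mult_apply[OF assms] del: transpose_matrix_vector)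
qed

lemma norm_Pperm_mult:
  assumes "p permutes (UNIV::'d set)"
  shows "norm (Pperm H p *v x) = norm x"
  unfolding Pperm_mult
  by (simp only: norm_transpose_mult sum_perm_mat_mult[OF assms] sum_mult_H norm_perm_mat_mult[OF assms]
                 norm_H_mult)

lemma H_mult_Pperm_mult:
  assumes "p permutes (UNIV::'d set)"
  shows "H *v (Pperm H p *v x) = perm_mat p *v (H *v x)"
  unfolding Pperm_mult by (rule H_mult_transpose_mult) (simp only: sum_perm_mat_mult[OF assms] sum_mult_H)

lemma Pperm_mult_Xd:
  assumes "p permutes (UNIV::'d set)" and "x \<in> Xd H"
  shows "Pperm H p *v x \<in> Xd H"
  using assms(2)
  by (simp add: Xd_def gam_inner H_mult_Pperm_mult[OF assms(1)] perm_mat_mult_apply[OF assms(1)])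

lemma integrable_of_anchored:
  fixes g :: "real^'k \<Rightarrow> real"
  assumes "anchored H \<mu>" and "continuous_on UNIV g"
  shows "integrable \<mu> g"
proof (rule integrable_continuous_bounded_support[OF _ _ _ assms(2)])
  show "finite_measure \<mu>" "sets \<mu> = sets borel"
    using assms(1) by (auto simp: anchored_def prob_space_def)
  show "AE x in \<mu>. norm x \<le> real CARD('d) ^ 2"
    using assms(1) unfolding anchored_def by (auto elim!: eventually_mono intro: norm_le_of_Xd)
qed

lemma anchored_iff_coordinates:
  assumes "prob_space \<mu>" and "sets \<mu> = sets borel" and "AE x in \<mu>. x \<in> Xd H"
  shows "anchored H \<mu> \<longleftrightarrow> (\<forall>j. (\<integral>x. x $ j \<partial>\<mu>) = 0)"
proof -
  have "integrable \<mu> (\<lambda>x. x)"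
  proof (rule integrable_continuous_bounded_support)
    show "finite_measure \<mu>" using assms(1) by (simp add: prob_space_def)
    show "AE x in \<mu>. norm x \<le> real CARD('d) ^ 2"
      using assms(3) by (auto elim!: eventually_mono intro: norm_le_of_Xd)
  qed (use assms(2) in auto)
  then have "(\<integral>x. x \<partial>\<mu>) $ j = (\<integral>x. x $ j \<partial>\<mu>)" for j
    by (simp add: integral_bounded_linear[OF bounded_linear_vec_nth])
  then show ?thesis
    using assms by (simp add: anchored_def vec_eq_iff)
qed

end

section \<open>The symmetrized law\<close>

lemma sets_sym_law: "sets (sym_law H \<rho>) = sets borel"
  unfolding sym_law_def using sets.sigma_sets_eq[of "borel :: (real^'k) measure"] by simp

lemma measurable_distr_Pperm:
  fixes H :: "real^'k^'d"
  assumes "prob_space \<rho>" and "sets \<rho> = sets borel"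
  shows "(\<lambda>p. distr \<rho> borel (\<lambda>x. Pperm H p *v x)) \<in> measurable (measure_pmf P) (prob_algebra borel)"
  using assms measurable_cong_sets[OF assms(2) refl]
  by (auto simp: space_prob_algebra intro!: prob_space.prob_space_distr)

lemma sym_law_eq_bind:
  fixes H :: "real^'k^'d"
  assumes "prob_space \<rho>" and "sets \<rho> = sets borel"
  shows "sym_law H \<rho> = measure_pmf (pmf_of_set {p. p permutes (UNIV::'d set)})
                          \<bind> (\<lambda>p. distr \<rho> borel (\<lambda>x. Pperm H p *v x))"
proof -
  let ?S = "{p. p permutes (UNIV::'d set)}"
  let ?M = "measure_pmf (pmf_of_set ?S) \<bind> (\<lambda>p. distr \<rho> borel (\<lambda>x. Pperm H p *v x))"
  have meas: "(\<lambda>p. distr \<rho> borel (\<lambda>x. Pperm H p *v x)) \<in> measurable (measure_pmf (pmf_of_set ?S)) (subprob_algebra borel)"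
    by (rule measurable_prob_algebraD[OF measurable_distr_Pperm[OF assms]])
  have sets_M: "sets ?M = sets borel"
    by (rule sets_bind_measurable[OF meas]) simp
  have S: "finite ?S" "?S \<noteq> {}" "card ?S = fact CARD('d)"
    using permutes_id[of UNIV] by (auto simp: finite_permutations card_permutations simp del: permutes_id)
  have "emeasure ?M A
      = (\<Sum>p\<in>?S. emeasure (distr \<rho> borel (\<lambda>x. Pperm H p *v x)) A) / of_nat (fact CARD('d))"
    if "A \<in> sets borel" for A
    using S by (simp add: emeasure_bind[OF _ meas that] nn_integral_pmf_of_set)
  then have "sym_law H \<rho> = measure_of UNIV (sets borel) (emeasure ?M)"
    unfolding sym_law_def
    by (intro measure_of_eq) (simp_all add: sets.sigma_sets_eq[of "borel :: (real^'k) measure", simplified])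
  also have "\<dots> = ?M"
    using measure_of_of_measure[of ?M] sets_eq_imp_space_eq[OF sets_M] sets_M by simp
  finally show ?thesis .
qed

context simplex_chart
begin

lemma integral_sym_law:
  fixes g :: "real^'k \<Rightarrow> real"
  assumes "anchored H \<rho>" and "continuous_on UNIV g"
  shows "(\<integral>x. g x \<partial>sym_law H \<rho>)
           = (\<Sum>p | p permutes (UNIV::'d set). \<integral>x. g (Pperm H p *v x) \<partial>\<rho>) / fact CARD('d)"
proof -
  let ?S = "{p. p permutes (UNIV::'d set)}"
  have P: "prob_space \<rho>" and S: "sets \<rho> = sets borel"
    using assms(1) by (auto simp: anchored_def)
  have Pperm_meas: "(\<lambda>x. Pperm H p *v x) \<in> measurable \<rho> borel" for p
    using measurable_cong_sets[OF S refl] borel_measurable_matrix_vector_mult by blast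
  have g_meas: "g \<in> borel_measurable borel"
    using borel_measurable_continuous_onI[OF assms(2)] .
  have g_int: "integrable (distr \<rho> borel (\<lambda>x. Pperm H p *v x)) g" for p
  proof -
    have "continuous_on UNIV (\<lambda>x. g (Pperm H p *v x))"
      by (intro continuous_on_compose2[OF assms(2)] continuous_intros) auto
    then show ?thesis
      using Pperm_meas g_meas integrable_of_anchored[OF assms(1)] by (simp add: integrable_distr_eq)
  qed
  have S_ne: "?S \<noteq> {}" using permutes_id by blast
  have "(\<integral>x. g x \<partial>sym_law H \<rho>) = (\<Sum>p\<in>?S. \<integral>x. g x \<partial>distr \<rho> borel (\<lambda>x. Pperm H p *v x)) / card ?S"
    unfolding sym_law_eq_bind[OF P S] using P Pperm_meas g_int
    by (intro integral_bind_pmf_of_set[where K=borel, OF _ S_ne])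
       (auto simp: finite_permutations prob_space_imp_subprob_space prob_space.prob_space_distr)
  then show ?thesis
    using Pperm_meas g_meas by (simp add: integral_distr card_permutations)
qed

lemma anchored_sym_law:
  assumes "anchored H \<rho>"
  shows "anchored H (sym_law H \<rho>)"
proof -
  let ?S = "{p. p permutes (UNIV::'d set)}"
  have P: "prob_space \<rho>" and S: "sets \<rho> = sets borel" and X: "AE x in \<rho>. x \<in> Xd H"
    using assms by (auto simp: anchored_def)
  have meas: "(\<lambda>p. distr \<rho> borel (\<lambda>x. Pperm H p *v x)) \<in> measurable (measure_pmf (pmf_of_set ?S)) (prob_algebra borel)"
    by (rule measurable_distr_Pperm[OF P S])
  have S_ne: "finite ?S" "?S \<noteq> {}"
    using permutes_id[of UNIV] by (auto simp: finite_permutations simp del: permutes_id)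
  have Pperm_meas: "(\<lambda>x. Pperm H p *v x) \<in> measurable \<rho> borel" for p
    using measurable_cong_sets[OF S refl] borel_measurable_matrix_vector_mult by blast
  have prob: "prob_space (sym_law H \<rho>)"
    unfolding sym_law_eq_bind[OF P S]
    by (rule prob_space_bind'[OF _ meas]) (simp add: space_prob_algebra prob_space_measure_pmf)
  have "AE x in sym_law H \<rho>. x \<in> Xd H"
  proof -
    have "AE y in distr \<rho> borel (\<lambda>x. Pperm H p *v x). y \<in> Xd H" if "p \<in> ?S" for p
      using X that Xd_borel
      by (subst AE_distr_iff[OF Pperm_meas]) (auto elim!: eventually_mono intro: Pperm_mult_Xd)
    then show ?thesis
      unfolding sym_law_eq_bind[OF P S] using S_ne Xd_borel
      by (subst AE_bind[OF measurable_prob_algebraD[OF meas]]) (auto simp: AE_measure_pmf_iff)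
  qed
  moreover have "(\<integral>x. x $ j \<partial>sym_law H \<rho>) = 0" for j
  proof -
    have "(\<integral>x. (Pperm H p *v x) $ j \<partial>\<rho>) = (\<Sum>b\<in>UNIV. Pperm H p $ j $ b * (\<integral>x. x $ b \<partial>\<rho>))" for p
      unfolding matrix_vector_mult_def vec_lambda_beta
      by (subst Bochner_Integration.integral_sum)
         (auto intro!: integrable_of_anchored[OF assms]
                       continuous_on_component continuous_on_id)
    then show ?thesis
      using assms anchored_iff_coordinates[OF P S X]
      by (simp add: integral_sym_law[OF assms continuous_on_component[OF continuous_on_id]])
  qed
  ultimately show ?thesis
    using anchored_iff_coordinates[OF prob sets_sym_law] by blast
qed

lemma sum_H_mult_exchangeable:
  "(\<Sum>a\<in>UNIV. \<Sum>b\<in>UNIV. H $ a $ l * H $ b $ m * (if a = b then \<alpha> else \<beta>))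
     = (\<alpha> - \<beta>) * mat 1 $ l $ m"
proof -
  have "H $ a $ l * H $ b $ m * (if a = b then \<alpha> else \<beta>)
      = \<beta> * (H $ a $ l * H $ b $ m) + (if a = b then (\<alpha> - \<beta>) * (H $ a $ l * H $ a $ m) else 0)"
    for a b by (simp add: algebra_simps)
  then have "(\<Sum>a\<in>UNIV. \<Sum>b\<in>UNIV. H $ a $ l * H $ b $ m * (if a = b then \<alpha> else \<beta>))
      = \<beta> * (\<Sum>a\<in>UNIV. \<Sum>b\<in>UNIV. H $ a $ l * H $ b $ m)
        + (\<alpha> - \<beta>) * (\<Sum>a\<in>UNIV. H $ a $ l * H $ a $ m)"
    by (simp add: sum.distrib sum_distrib_left)
  also have "(\<Sum>a\<in>UNIV. H $ a $ l * H $ a $ m) = mat 1 $ l $ m"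
    using H_orth by (simp add: matrix_matrix_mult_def transpose_def vec_eq_iff)
  finally show ?thesis by (simp add: sum_product[symmetric] column_sum_eq_0)
qed

lemma trace_Sig_anchored:
  assumes "anchored H \<mu>"
  shows "trace (Sig \<mu>) = (\<integral>x. (norm x)\<^sup>2 \<partial>\<mu>)"
  by (intro trace_Sig_eq_integral integrable_of_anchored[OF assms] continuous_intros)

lemma trace_Sig_sym_law:
  assumes "anchored H \<rho>"
  shows "trace (Sig (sym_law H \<rho>)) = trace (Sig \<rho>)"
proof -
  have "trace (Sig (sym_law H \<rho>)) = (\<integral>x. (norm x)\<^sup>2 \<partial>sym_law H \<rho>)"
    by (rule trace_Sig_anchored[OF anchored_sym_law[OF assms]])
  also have "\<dots> = (\<Sum>p | p permutes (UNIV::'d set). \<integral>x. (norm (Pperm H p *v x))\<^sup>2 \<partial>\<rho>) / fact CARD('d)"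
    by (intro integral_sym_law assms continuous_intros)
  also have "\<dots> = (\<integral>x. (norm x)\<^sup>2 \<partial>\<rho>)"
    by (simp add: norm_Pperm_mult card_permutations)
  finally show ?thesis by (simp add: trace_Sig_anchored[OF assms])
qed

lemma integral_Pperm_mult_nth_mult:
  assumes "anchored H \<rho>" and "p permutes UNIV"
  shows "(\<integral>x. (Pperm H p *v x) $ l * (Pperm H p *v x) $ m \<partial>\<rho>)
           = (\<Sum>a\<in>UNIV. \<Sum>b\<in>UNIV. H $ a $ l * H $ b $ m *
                (\<integral>x. (H *v x) $ inv p a * (H *v x) $ inv p b \<partial>\<rho>))"
proof -
  have "(Pperm H p *v x) $ l * (Pperm H p *v x) $ m
      = (\<Sum>a\<in>UNIV. \<Sum>b\<in>UNIV. H $ a $ l * H $ b $ m * ((H *v x) $ inv p a * (H *v x) $ inv p b))" for x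
    unfolding Pperm_mult_nth[OF assms(2)] sum_product by (simp only: mult_ac)
  moreover have "integrable \<rho> (\<lambda>x. c * ((H *v x) $ a * (H *v x) $ b))" for c a b
    by (intro integrable_of_anchored[OF assms(1)] continuous_intros)
  ultimately show ?thesis
    by (simp add: Bochner_Integration.integral_sum)
qed

lemma Sig_sym_law_nth:
  assumes "anchored H \<rho>"
  shows "Sig (sym_law H \<rho>) $ l $ m
           = (\<Sum>a\<in>UNIV. \<Sum>b\<in>UNIV. H $ a $ l * H $ b $ m *
                (\<Sum>p | p permutes (UNIV::'d set). \<integral>x. (H *v x) $ p a * (H *v x) $ p b \<partial>\<rho>))
             / fact CARD('d)"
proof -
  let ?W = "\<lambda>a b. \<integral>x. (H *v x) $ a * (H *v x) $ b \<partial>\<rho>"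
  have "continuous_on UNIV (\<lambda>x::real^'k. x $ l * x $ m)" by (intro continuous_intros)
  then have "Sig (sym_law H \<rho>) $ l $ m
      = (\<Sum>p | p permutes (UNIV::'d set). \<integral>x. (Pperm H p *v x) $ l * (Pperm H p *v x) $ m \<partial>\<rho>)
        / fact CARD('d)"
    unfolding Sig_def by (simp add: integral_sym_law[OF assms])
  also have "(\<Sum>p | p permutes (UNIV::'d set). \<integral>x. (Pperm H p *v x) $ l * (Pperm H p *v x) $ m \<partial>\<rho>)
      = (\<Sum>p | p permutes (UNIV::'d set). \<Sum>a\<in>UNIV. \<Sum>b\<in>UNIV.
           H $ a $ l * H $ b $ m * ?W (inv p a) (inv p b))"
    by (rule sum.cong[OF refl]) (simp add: integral_Pperm_mult_nth_mult[OF assms])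
  also have "(\<Sum>p | p permutes (UNIV::'d set). \<Sum>a\<in>UNIV. \<Sum>b\<in>UNIV.
           H $ a $ l * H $ b $ m * ?W (inv p a) (inv p b))
      = (\<Sum>a\<in>UNIV. \<Sum>b\<in>UNIV. H $ a $ l * H $ b $ m *
           (\<Sum>p | p permutes (UNIV::'d set). ?W (inv p a) (inv p b)))"
    by (subst sum.swap, rule sum.cong[OF refl], subst sum.swap) (simp add: sum_distrib_left)
  finally show ?thesis
    using sum_permutations_inverse[of "\<lambda>p. ?W (p a) (p b)" UNIV for a b] by simp
qed

lemma Sig_sym_law_scaleR_mat_1:
  assumes "anchored H \<rho>" and "CARD('d) \<ge> 2"
  obtains c where "Sig (sym_law H \<rho>) = c *\<^sub>R mat 1"
proof -
  define G where "G a b = (\<Sum>p | p permutes (UNIV::'d set). \<integral>x. (H *v x) $ p a * (H *v x) $ p b \<partial>\<rho>)"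
    for a b
  have "\<exists>a0 b0 :: 'd. a0 \<noteq> b0"
  proof (rule ccontr)
    assume "\<nexists>a0 b0 :: 'd. a0 \<noteq> b0"
    then have "CARD('d) \<le> Suc 0" by (simp add: card_le_Suc0_iff_eq)
    then show False using assms(2) by simp
  qed
  then obtain a0 b0 :: 'd where "a0 \<noteq> b0" by blast
  then have G_exch: "G a b = (if a = b then G a0 a0 else G a0 b0)" for a b
    unfolding G_def using sum_permutations_apply_diag sum_permutations_apply_off_diag by auto
  have "Sig (sym_law H \<rho>) $ l $ m = (G a0 a0 - G a0 b0) / fact CARD('d) * mat 1 $ l $ m" for l m
  proof -
    have "Sig (sym_law H \<rho>) $ l $ m
        = (\<Sum>a\<in>UNIV. \<Sum>b\<in>UNIV. H $ a $ l * H $ b $ m * G a b) / fact CARD('d)"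
      by (simp add: Sig_sym_law_nth[OF assms(1)] G_def)
    also have "(\<Sum>a\<in>UNIV. \<Sum>b\<in>UNIV. H $ a $ l * H $ b $ m * G a b) = (G a0 a0 - G a0 b0) * mat 1 $ l $ m"
      by (subst G_exch) (rule sum_H_mult_exchangeable)
    finally show ?thesis by simp
  qed
  then show ?thesis
    using that[of "(G a0 a0 - G a0 b0) / fact CARD('d)"] by (simp add: vec_eq_iff)
qed

lemma Sig_sym_law:
  assumes "anchored H \<rho>" and "CARD('d) \<ge> 2"
  shows "Sig (sym_law H \<rho>) = (trace (Sig \<rho>) / real CARD('k)) *\<^sub>R mat 1"
proof -
  obtain c where c: "Sig (sym_law H \<rho>) = c *\<^sub>R mat 1"
    using Sig_sym_law_scaleR_mat_1[OF assms] .
  then have "c * real CARD('k) = trace (Sig \<rho>)"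
    using trace_Sig_sym_law[OF assms(1)] by (simp add: trace_scaleR_mat_1)
  then show ?thesis using c by (simp add: field_simps)
qed

lemma integral_nth_mult_norm_sym_law:
  assumes "anchored H \<rho>"
  shows "(\<integral>x. x $ l * (norm x)\<^sup>2 \<partial>sym_law H \<rho>) = 0"
proof -
  define w where "w a = (\<integral>x. (H *v x) $ a * (norm x)\<^sup>2 \<partial>\<rho>)" for a
  fix a0 :: 'd
  have moment: "(\<integral>x. (Pperm H p *v x) $ l * (norm (Pperm H p *v x))\<^sup>2 \<partial>\<rho>)
      = (\<Sum>a\<in>UNIV. H $ a $ l * w (inv p a))" if "p permutes UNIV" for p
  proof -
    have "(Pperm H p *v x) $ l * (norm (Pperm H p *v x))\<^sup>2
        = (\<Sum>a\<in>UNIV. H $ a $ l * ((H *v x) $ inv p a * (norm x)\<^sup>2))" for x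
      by (simp add: Pperm_mult_nth[OF that] norm_Pperm_mult[OF that] sum_distrib_left mult_ac)
    moreover have "integrable \<rho> (\<lambda>x. H $ a $ l * ((H *v x) $ b * (norm x)\<^sup>2))" for a b
      by (intro integrable_of_anchored[OF assms] continuous_intros)
    ultimately show ?thesis
      by (simp add: w_def Bochner_Integration.integral_sum)
  qed
  have "(\<Sum>p | p permutes (UNIV::'d set). w (inv p a)) = (\<Sum>p | p permutes (UNIV::'d set). w (p a0))" for a
    using sum_permutations_inverse[of "\<lambda>p. w (p a)" UNIV]
      sum_permutations_apply_diag[of "\<lambda>i j. w i" a a0] by simp
  then have "(\<Sum>p | p permutes (UNIV::'d set). \<Sum>a\<in>UNIV. H $ a $ l * w (inv p a))
      = (\<Sum>a\<in>UNIV. H $ a $ l) * (\<Sum>p | p permutes (UNIV::'d set). w (p a0))"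
    by (subst sum.swap) (simp add: sum_distrib_left[symmetric] sum_distrib_right)
  moreover have "continuous_on UNIV (\<lambda>x::real^'k. x $ l * (norm x)\<^sup>2)" by (intro continuous_intros)
  ultimately show ?thesis
    by (simp add: integral_sym_law[OF assms] moment column_sum_eq_0)
qed

end

section \<open>The i.i.d. risk\<close>

locale observation_model = simplex_chart H for H :: "real^'k^'d" +
  fixes \<mu> :: "(real^'k) measure" and \<theta> :: "real^'d"
  assumes anchored_mu: "anchored H \<mu>" and theta: "\<theta> \<in> prob_simplex"
begin

lemma prob_space_mu: "prob_space \<mu>"
  and sets_mu: "sets \<mu> = sets borel"
  and AE_Xd_mu: "AE x in \<mu>. x \<in> Xd H"
  and integral_nth_mu: "(\<integral>x. x $ j \<partial>\<mu>) = 0"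
  using anchored_mu anchored_iff_coordinates by (auto simp: anchored_def)

lemma integrable_mu: "continuous_on UNIV g \<Longrightarrow> integrable \<mu> (g :: real^'k \<Rightarrow> real)"
  by (rule integrable_of_anchored[OF anchored_mu])

declare sets_mu [measurable_cong]

lemma borel_measurable_density: "(\<lambda>x. 1 + hvec H \<theta> \<bullet> x) \<in> borel_measurable \<mu>"
  by measurable

lemma AE_density_nonneg: "AE x in \<mu>. 0 \<le> 1 + hvec H \<theta> \<bullet> x"
  using AE_Xd_mu by eventually_elim (rule one_plus_hvec_inner_nonneg[OF _ theta])

lemma integral_density_mult:
  fixes g :: "real^'k \<Rightarrow> real"
  assumes "continuous_on UNIV g"
  shows "(\<integral>x. (1 + hvec H \<theta> \<bullet> x) * g x \<partial>\<mu>)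
           = (\<integral>x. g x \<partial>\<mu>) + (\<Sum>l\<in>UNIV. hvec H \<theta> $ l * (\<integral>x. x $ l * g x \<partial>\<mu>))"
proof -
  have int: "integrable \<mu> (\<lambda>x. x $ l * g x)" for l
    by (intro integrable_mu continuous_intros assms)
  have "(\<integral>x. (1 + hvec H \<theta> \<bullet> x) * g x \<partial>\<mu>)
      = (\<integral>x. g x + (\<Sum>l\<in>UNIV. hvec H \<theta> $ l * (x $ l * g x)) \<partial>\<mu>)"
    by (simp add: inner_vec_def algebra_simps sum_distrib_left sum_distrib_right)
  also have "\<dots> = (\<integral>x. g x \<partial>\<mu>) + (\<Sum>l\<in>UNIV. hvec H \<theta> $ l * (\<integral>x. x $ l * g x \<partial>\<mu>))"
    using int integrable_mu[OF assms] by simp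
  finally show ?thesis .
qed

lemma prob_space_obs_law: "prob_space (obs_law H \<theta> \<mu>)"
proof (rule prob_spaceI)
  have "emeasure (obs_law H \<theta> \<mu>) (space (obs_law H \<theta> \<mu>)) = (\<integral>\<^sup>+x. ennreal (1 + hvec H \<theta> \<bullet> x) \<partial>\<mu>)"
    unfolding obs_law_def using borel_measurable_density by (simp add: emeasure_density)
  also have "\<dots> = ennreal (\<integral>x. 1 + hvec H \<theta> \<bullet> x \<partial>\<mu>)"
    by (intro nn_integral_eq_integral integrable_mu continuous_intros AE_density_nonneg)
  also have "(\<integral>x. 1 + hvec H \<theta> \<bullet> x \<partial>\<mu>) = 1"
    using integral_density_mult[of "\<lambda>_. 1"] prob_space.prob_space[OF prob_space_mu]
    by (simp add: integral_nth_mu)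
  finally show "emeasure (obs_law H \<theta> \<mu>) (space (obs_law H \<theta> \<mu>)) = 1" by simp
qed

lemma
  fixes g :: "real^'k \<Rightarrow> real"
  assumes "continuous_on UNIV g"
  shows integrable_obs_law: "integrable (obs_law H \<theta> \<mu>) g"
    and integral_obs_law: "(\<integral>x. g x \<partial>obs_law H \<theta> \<mu>) = (\<integral>x. (1 + hvec H \<theta> \<bullet> x) * g x \<partial>\<mu>)"
proof -
  have g_meas: "g \<in> borel_measurable \<mu>"
    using borel_measurable_continuous_onI[OF assms] by measurable
  have "integrable \<mu> (\<lambda>x. (1 + hvec H \<theta> \<bullet> x) *\<^sub>R g x)"
    by (intro integrable_mu continuous_intros assms)
  then show "integrable (obs_law H \<theta> \<mu>) g"
    unfolding obs_law_def using borel_measurable_density AE_density_nonneg g_meas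
    by (subst integrable_density) auto
  show "(\<integral>x. g x \<partial>obs_law H \<theta> \<mu>) = (\<integral>x. (1 + hvec H \<theta> \<bullet> x) * g x \<partial>\<mu>)"
    unfolding obs_law_def using borel_measurable_density AE_density_nonneg g_meas
    by (subst integral_density) auto
qed

lemma integral_nth_obs_law: "(\<integral>x. x $ j \<partial>obs_law H \<theta> \<mu>) = (Sig \<mu> *v hvec H \<theta>) $ j"
proof -
  have "(\<integral>x. x $ j \<partial>obs_law H \<theta> \<mu>) = (\<integral>x. (1 + hvec H \<theta> \<bullet> x) * x $ j \<partial>\<mu>)"
    by (intro integral_obs_law continuous_intros)
  also have "\<dots> = (\<Sum>l\<in>UNIV. hvec H \<theta> $ l * (\<integral>x. x $ l * x $ j \<partial>\<mu>))"
    by (simp add: integral_density_mult[OF continuous_on_component[OF continuous_on_id]] integral_nth_mu)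
  finally show ?thesis
    by (simp add: Sig_def matrix_vector_mult_def mult.commute)
qed

lemma theta_hat_minus_theta:
  "theta_hat n H \<mu> X - \<theta>
     = H *v (matrix_inv (Sig \<mu>) *v ((1 / real n) *\<^sub>R (\<Sum>m<n. X m)) - hvec H \<theta>)"
  using H_mult_hvec[OF theta]
  by (simp add: theta_hat_def algebra_simps)

lemma norm_theta_hat_minus_theta:
  assumes "n \<ge> 1"
  shows "(norm (theta_hat n H \<mu> X - \<theta>))\<^sup>2
           = (\<Sum>i\<in>UNIV. (\<Sum>m<n. (matrix_inv (Sig \<mu>) *v X m) $ i - hvec H \<theta> $ i)\<^sup>2) / (real n)\<^sup>2"
proof -
  let ?A = "matrix_inv (Sig \<mu>)"
  have "?A *v ((1 / real n) *\<^sub>R (\<Sum>m<n. X m)) - hvec H \<theta> = (1 / real n) *\<^sub>R (\<Sum>m<n. ?A *v X m - hvec H \<theta>)"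
    using assms
    by (simp add: matrix_vector_mult_scaleR linear_sum[OF matrix_vector_mul_linear] sum_subtractf
                  scaleR_diff_right sum_constant_scaleR del: sum_constant)
  then have "(norm (theta_hat n H \<mu> X - \<theta>))\<^sup>2 = (norm ((1 / real n) *\<^sub>R (\<Sum>m<n. ?A *v X m - hvec H \<theta>)))\<^sup>2"
    by (simp add: theta_hat_minus_theta norm_H_mult)
  also have "\<dots> = (\<Sum>i\<in>UNIV. (\<Sum>m<n. (?A *v X m) $ i - hvec H \<theta> $ i)\<^sup>2) / (real n)\<^sup>2"
    by (simp add: power2_norm_vec power_divide sum_divide_distrib)
  finally show ?thesis .
qed

lemma integral_inverse_Sig_mult_obs_law:
  assumes "invertible (Sig \<mu>)"
  shows "(\<integral>z. (matrix_inv (Sig \<mu>) *v z) $ i \<partial>obs_law H \<theta> \<mu>) = hvec H \<theta> $ i"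
proof -
  let ?A = "matrix_inv (Sig \<mu>)"
  have "(\<integral>z. (?A *v z) $ i \<partial>obs_law H \<theta> \<mu>) = (\<Sum>j\<in>UNIV. ?A $ i $ j * (\<integral>z. z $ j \<partial>obs_law H \<theta> \<mu>))"
    unfolding matrix_vector_mult_def vec_lambda_beta
    by (subst Bochner_Integration.integral_sum)
       (auto intro!: integrable_obs_law continuous_on_component continuous_on_id)
  also have "\<dots> = (?A *v (Sig \<mu> *v hvec H \<theta>)) $ i"
    by (simp add: integral_nth_obs_law matrix_vector_mult_def[of ?A])
  finally show ?thesis
    by (simp add: matrix_vector_mul_assoc matrix_inv_left[OF assms])
qed

lemma
  assumes "invertible (Sig \<mu>)"
  shows integral_centred_obs_law:
      "(\<integral>z. (matrix_inv (Sig \<mu>) *v z) $ i - hvec H \<theta> $ i \<partial>obs_law H \<theta> \<mu>) = 0"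
    and sum_integral_square_centred_obs_law:
      "(\<Sum>i\<in>UNIV. \<integral>z. ((matrix_inv (Sig \<mu>) *v z) $ i - hvec H \<theta> $ i)\<^sup>2 \<partial>obs_law H \<theta> \<mu>)
         = (\<integral>z. (1 + hvec H \<theta> \<bullet> z) * (norm (matrix_inv (Sig \<mu>) *v z))\<^sup>2 \<partial>\<mu>)
           - (norm (hvec H \<theta>))\<^sup>2"
proof -
  let ?A = "matrix_inv (Sig \<mu>)" and ?h = "hvec H \<theta>" and ?\<nu> = "obs_law H \<theta> \<mu>"
  define Y where "Y i z = (?A *v z) $ i - ?h $ i" for i z
  have int: "integrable ?\<nu> (\<lambda>z. (?A *v z) $ i)" "integrable ?\<nu> (\<lambda>z. ((?A *v z) $ i)\<^sup>2)"
    "integrable ?\<nu> (Y i)" for i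
    unfolding Y_def by (intro integrable_obs_law continuous_intros)+
  interpret \<nu>: prob_space ?\<nu> by (rule prob_space_obs_law)
  show mean: "(\<integral>z. (?A *v z) $ i - ?h $ i \<partial>?\<nu>) = 0" for i
    using int by (simp add: integral_inverse_Sig_mult_obs_law[OF assms] \<nu>.prob_space)
  have "(Y i z)\<^sup>2 = ((?A *v z) $ i)\<^sup>2 - 2 * ?h $ i * Y i z - (?h $ i)\<^sup>2" for i z
    by (simp add: Y_def power2_eq_square algebra_simps)
  then have "(\<integral>z. (Y i z)\<^sup>2 \<partial>?\<nu>) = (\<integral>z. ((?A *v z) $ i)\<^sup>2 \<partial>?\<nu>) - (?h $ i)\<^sup>2" for i
    using int mean by (simp add: Y_def[abs_def] \<nu>.prob_space)
  then have "(\<Sum>i\<in>UNIV. \<integral>z. (Y i z)\<^sup>2 \<partial>?\<nu>) = (\<integral>z. (norm (?A *v z))\<^sup>2 \<partial>?\<nu>) - (norm ?h)\<^sup>2"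
    using int by (simp add: sum_subtractf power2_norm_vec)
  moreover have "continuous_on UNIV (\<lambda>z. (norm (?A *v z))\<^sup>2)" by (intro continuous_intros)
  ultimately show "(\<Sum>i\<in>UNIV. \<integral>z. ((?A *v z) $ i - ?h $ i)\<^sup>2 \<partial>?\<nu>)
      = (\<integral>z. (1 + ?h \<bullet> z) * (norm (?A *v z))\<^sup>2 \<partial>\<mu>) - (norm ?h)\<^sup>2"
    by (simp add: Y_def integral_obs_law)
qed

lemma R_iid_eq:
  assumes "invertible (Sig \<mu>)" and "n \<ge> 1"
  shows "R_iid n H \<theta> \<mu>
           = ennreal (((\<integral>z. (1 + hvec H \<theta> \<bullet> z) * (norm (matrix_inv (Sig \<mu>) *v z))\<^sup>2 \<partial>\<mu>)
                       - (norm (hvec H \<theta>))\<^sup>2) / real n)"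
proof -
  let ?P = "PiM {..<n} (\<lambda>_. obs_law H \<theta> \<mu>)"
  define Y where "Y i z = (matrix_inv (Sig \<mu>) *v z) $ i - hvec H \<theta> $ i" for i z
  have "integrable (obs_law H \<theta> \<mu>) (Y i)" "integrable (obs_law H \<theta> \<mu>) (\<lambda>z. (Y i z)\<^sup>2)" for i
    unfolding Y_def by (intro integrable_obs_law continuous_intros)+
  moreover have "(\<integral>z. Y i z \<partial>obs_law H \<theta> \<mu>) = 0" for i
    unfolding Y_def by (rule integral_centred_obs_law[OF assms(1)])
  ultimately have iid: "integrable ?P (\<lambda>x. (\<Sum>m<n. Y i (x m))\<^sup>2)"
      "(\<integral>x. (\<Sum>m<n. Y i (x m))\<^sup>2 \<partial>?P) = real n * (\<integral>z. (Y i z)\<^sup>2 \<partial>obs_law H \<theta> \<mu>)" for i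
    using integrable_PiM_square_sum integral_PiM_square_sum_centered prob_space_obs_law by blast+
  have "R_iid n H \<theta> \<mu> = (\<integral>\<^sup>+x. ennreal ((\<Sum>i\<in>UNIV. (\<Sum>m<n. Y i (x m))\<^sup>2) / (real n)\<^sup>2) \<partial>?P)"
    using assms by (simp add: R_iid_def norm_theta_hat_minus_theta Y_def)
  also have "\<dots> = ennreal (\<integral>x. (\<Sum>i\<in>UNIV. (\<Sum>m<n. Y i (x m))\<^sup>2) / (real n)\<^sup>2 \<partial>?P)"
    using iid(1) by (intro nn_integral_eq_integral AE_I2) (auto intro!: divide_nonneg_nonneg sum_nonneg)
  also have "(\<integral>x. (\<Sum>i\<in>UNIV. (\<Sum>m<n. Y i (x m))\<^sup>2) / (real n)\<^sup>2 \<partial>?P)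
      = (\<Sum>i\<in>UNIV. \<integral>z. (Y i z)\<^sup>2 \<partial>obs_law H \<theta> \<mu>) / real n"
    using iid assms(2) by (simp add: sum_distrib_left[symmetric] power2_eq_square)
  finally show ?thesis
    by (simp add: Y_def sum_integral_square_centred_obs_law[OF assms(1)])
qed

end

definition simplex_barycenter :: "real^'d" where
  "simplex_barycenter = (1 / real CARD('d)) *\<^sub>R ones"

lemma simplex_barycenter_in_prob_simplex: "simplex_barycenter \<in> prob_simplex"
  by (simp add: simplex_barycenter_def prob_simplex_def ones_def)

context simplex_chart
begin

lemma hvec_simplex_barycenter: "hvec H simplex_barycenter = 0"
  by (simp add: hvec_eq simplex_barycenter_def matrix_vector_mult_scaleR transpose_mult_ones
           del: transpose_matrix_vector)

lemma R_iid_sym_law: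
  assumes "anchored H \<rho>" and "CARD('d) \<ge> 2" and "n \<ge> 1" and "trace (Sig \<rho>) \<noteq> 0"
    and "\<theta> \<in> prob_simplex"
  shows "R_iid n H \<theta> (sym_law H \<rho>)
           = ennreal ((real CARD('k) ^ 2 / trace (Sig \<rho>) - (norm (hvec H \<theta>))\<^sup>2) / real n)"
proof -
  let ?T = "trace (Sig \<rho>)" and ?\<rho>' = "sym_law H \<rho>"
  define c where "c = ?T / real CARD('k)"
  interpret observation_model H ?\<rho>' \<theta>
    by (intro observation_model.intro observation_model_axioms.intro simplex_chart_axioms
              anchored_sym_law assms(1,5))
  have c: "c \<noteq> 0" using assms(4) by (simp add: c_def)
  have Sig: "Sig ?\<rho>' = c *\<^sub>R mat 1"
    unfolding c_def by (rule Sig_sym_law[OF assms(1,2)])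
  have "(\<integral>z. (1 + hvec H \<theta> \<bullet> z) * (norm (matrix_inv (Sig ?\<rho>') *v z))\<^sup>2 \<partial>?\<rho>')
      = (\<integral>z. (1 + hvec H \<theta> \<bullet> z) * (norm z)\<^sup>2 \<partial>?\<rho>') / c\<^sup>2"
    by (simp add: Sig matrix_inv_scaleR_mat_1[OF c] scaleR_matrix_vector_assoc[symmetric]
                  power_mult_distrib power_divide)
  also have "(\<integral>z. (1 + hvec H \<theta> \<bullet> z) * (norm z)\<^sup>2 \<partial>?\<rho>') = ?T"
  proof -
    have "continuous_on UNIV (\<lambda>z::real^'k. (norm z)\<^sup>2)" by (intro continuous_intros)
    then show ?thesis
      using trace_Sig_anchored[OF anchored_mu] trace_Sig_sym_law[OF assms(1)]
      by (simp add: integral_density_mult integral_nth_mult_norm_sym_law[OF assms(1)])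
  qed
  finally have "(\<integral>z. (1 + hvec H \<theta> \<bullet> z) * (norm (matrix_inv (Sig ?\<rho>') *v z))\<^sup>2 \<partial>?\<rho>')
      = real CARD('k) ^ 2 / ?T"
    using assms(4) by (simp add: c_def power2_eq_square)
  moreover have "invertible (Sig ?\<rho>')"
    using c by (simp add: Sig invertible_scaleR_mat_1_iff)
  ultimately show ?thesis
    by (simp add: R_iid_eq[OF _ assms(3)])
qed

lemma SUP_R_iid_sym_law:
  assumes "anchored H \<rho>" and "CARD('d) \<ge> 2" and "n \<ge> 1"
  shows "(SUP \<theta>\<in>prob_simplex. R_iid n H \<theta> (sym_law H \<rho>))
           = (if trace (Sig \<rho>) = 0 then \<infinity>
              else ennreal (real CARD('k) ^ 2 / (real n * trace (Sig \<rho>))))"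
proof (cases "trace (Sig \<rho>) = 0")
  case True
  then have "\<not> invertible (Sig (sym_law H \<rho>))"
    using invertible_scaleR_mat_1_iff[of 0] by (simp add: Sig_sym_law[OF assms(1,2)])
  then show ?thesis
    using simplex_barycenter_in_prob_simplex True by (auto simp: R_iid_def)
next
  case False
  let ?v = "ennreal (real CARD('k) ^ 2 / (real n * trace (Sig \<rho>)))"
  have "0 < trace (Sig \<rho>)"
    using False trace_Sig_anchored[OF assms(1)] by (simp add: order_le_neq_trans)
  then have "R_iid n H \<theta> (sym_law H \<rho>) \<le> ?v" if "\<theta> \<in> prob_simplex" for \<theta>
    using assms(3) by (simp add: R_iid_sym_law[OF assms False that] ennreal_leI divide_right_mono
                                  field_simps)
  moreover have "R_iid n H simplex_barycenter (sym_law H \<rho>) = ?v"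
    using False by (simp add: R_iid_sym_law[OF assms False simplex_barycenter_in_prob_simplex]
                              hvec_simplex_barycenter field_simps)
  ultimately show ?thesis
    using False simplex_barycenter_in_prob_simplex
    by (auto intro!: antisym SUP_least SUP_upper2[where i=simplex_barycenter])
qed

lemma R_iid_simplex_barycenter_ge:
  assumes "anchored H \<rho>" and "n \<ge> 1"
  shows "(if trace (Sig \<rho>) = 0 then \<infinity>
          else ennreal (real CARD('k) ^ 2 / (real n * trace (Sig \<rho>))))
         \<le> R_iid n H simplex_barycenter \<rho>"
proof (cases "invertible (Sig \<rho>)")
  case False
  then show ?thesis by (simp add: R_iid_def)
next
  case True
  interpret observation_model H \<rho> simplex_barycenter
    by (intro observation_model.intro observation_model_axioms.intro simplex_chart_axioms
              assms(1) simplex_barycenter_in_prob_simplex)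
  let ?Q = "\<integral>z. (norm (matrix_inv (Sig \<rho>) *v z))\<^sup>2 \<partial>\<rho>"
  have "real CARD('k) ^ 2 \<le> trace (Sig \<rho>) * ?Q"
  proof (rule card_square_le_trace_Sig_mult[OF _ sets_mu _ True])
    show "finite_measure \<rho>" using prob_space_mu by (simp add: prob_space_def)
    show "AE z in \<rho>. norm z \<le> real CARD('d) ^ 2"
      using AE_Xd_mu by (auto elim!: eventually_mono intro: norm_le_of_Xd)
  qed
  moreover have "0 \<le> trace (Sig \<rho>)"
    by (simp add: trace_Sig_anchored[OF assms(1)])
  ultimately have "0 < trace (Sig \<rho>)"
    by (cases "trace (Sig \<rho>) = 0") auto
  with \<open>real CARD('k) ^ 2 \<le> trace (Sig \<rho>) * ?Q\<close>
  have "trace (Sig \<rho>) \<noteq> 0" and "real CARD('k) ^ 2 / trace (Sig \<rho>) \<le> ?Q"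
    by (simp_all add: pos_divide_le_eq mult.commute)
  then show ?thesis
    using assms(2)
    by (simp add: R_iid_eq[OF True assms(2)] hvec_simplex_barycenter ennreal_leI divide_right_mono
                  field_simps)
qed

end

theorem corollary6p2:
  fixes H :: "real^'k^'d" and \<rho> :: "(real^'k) measure" and n :: nat
  assumes d: "CARD('d) \<ge> 2" and dk: "CARD('d) = CARD('k) + 1"
    and n: "n \<ge> 1"
    and H_orth: "transpose H ** H = mat 1"
    and H_span: "span (columns H) = {u. (\<Sum>i\<in>UNIV. u $ i) = 0}"
    and \<rho>: "anchored H \<rho>"
  shows "(SUP \<theta>\<in>prob_simplex. R_iid n H \<theta> (sym_law H \<rho>)) \<le> (SUP \<theta>\<in>prob_simplex. R_iid n H \<theta> \<rho>)
    \<and> (SUP \<theta>\<in>prob_simplex. R_iid n H \<theta> (sym_law H \<rho>)) =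
        (if trace (Sig \<rho>) = 0 then \<infinity>
         else ennreal ((real CARD('d) - 1)\<^sup>2 / (real n * trace (Sig \<rho>))))"
proof -
  interpret simplex_chart H
    using H_orth H_span by (rule simplex_chart.intro)
  have "(SUP \<theta>\<in>prob_simplex. R_iid n H \<theta> (sym_law H \<rho>)) \<le> R_iid n H simplex_barycenter \<rho>"
    unfolding SUP_R_iid_sym_law[OF \<rho> d n] by (rule R_iid_simplex_barycenter_ge[OF \<rho> n])
  also have "\<dots> \<le> (SUP \<theta>\<in>prob_simplex. R_iid n H \<theta> \<rho>)"
    by (rule SUP_upper[OF simplex_barycenter_in_prob_simplex])
  finally show ?thesis
    using SUP_R_iid_sym_law[OF \<rho> d n] dk by simp
qed

end
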